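(* Let $n \ge 1$ and $0 \le k < n$. There exists a comparison tournament $G$ on $n$ elements $x_1,\dots,x_n$ with the following property: for every set $S \subseteq \{x_1,\dots,x_n\}$ with $|S| < \min\{n, 2k+1\}$, there exists a choice of exactly $k$ corrupted elements that is valid for $G$ (i.e. $G$ restricted to the remaining $n-k$ uncorrupted elements is acyclic) and whose uncorrupted maximum does not lie in $S$. Consequently, any algorithm that always outputs a set containing the uncorrupted maximum must, on this instance, output a set of size at least $\min\{n, 2k+1\}$.
   Context: Model: there are $n$ elements $x_1,\dots,x_n$, exactly $k$ of which are corrupted (the algorithm does not know which). For every pair of distinct elements $x_u, x_v$ the comparison graph (a tournament) specifies that either $x_u$ is larger than $x_v$ or $x_v$ is larger than $x_u$. The comparison graph restricted to the $n-k$ uncorrupted elements is acyclic (a transitive tournament); comparisons involving corrupted elements may be oriented arbitrarily (possibly creating directed cycles). The uncorrupted maximum is the unique uncorrupted element larger than every other uncorrupted element. An algorithm knows $n$ and $k$, may query the orientation of any pair (a comparison query; answers are determined by the fixed comparison graph), and outputs a set of elements. *)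

theory Defs
  imports Main
begin

text \<open>Elements x_1..x_n are represented by the naturals 0..n-1.
  G u v means "u is larger than v" according to the comparison graph.\<close>

definition tournament :: "nat \<Rightarrow> (nat \<Rightarrow> nat \<Rightarrow> bool) \<Rightarrow> bool" where
  "tournament n G \<longleftrightarrow>
     (\<forall>u<n. \<not> G u u) \<and> (\<forall>u<n. \<forall>v<n. u \<noteq> v \<longrightarrow> (G u v \<longleftrightarrow> \<not> G v u))"

definition uncorrupted :: "nat \<Rightarrow> nat set \<Rightarrow> nat set" where
  "uncorrupted n C = {..<n} - C"

definition valid_corruption :: "nat \<Rightarrow> nat \<Rightarrow> (nat \<Rightarrow> nat \<Rightarrow> bool) \<Rightarrow> nat set \<Rightarrow> bool" where
  "valid_corruption n k G C \<longleftrightarrow>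
     C \<subseteq> {..<n} \<and> card C = k \<and>
     acyclic {(u, v). u \<in> uncorrupted n C \<and> v \<in> uncorrupted n C \<and> G u v}"

definition is_uncorrupted_max :: "nat \<Rightarrow> (nat \<Rightarrow> nat \<Rightarrow> bool) \<Rightarrow> nat set \<Rightarrow> nat \<Rightarrow> bool" where
  "is_uncorrupted_max n G C m \<longleftrightarrow>
     m \<in> uncorrupted n C \<and> (\<forall>v \<in> uncorrupted n C. v \<noteq> m \<longrightarrow> G m v)"

end

theory Submission
  imports Defs
begin

text \<open>Let N = min n (2k+1). Place the elements 0, ..., N-1 on a cycle and let u beat v when v lies
  strictly between 0 and N-k steps clockwise after u; since N \<le> 2k+1 no pair is covered in both
  directions. All remaining pairs are oriented by index, so the elements \<ge> N lose to the cycle.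
  For any m < N, corrupting the k elements cyclically preceding m leaves the arc m, m+1, ...,
  m+N-k-1 followed by the elements \<ge> N, on which the tournament is transitive with m on top.
  Hence each of the N elements of the cycle is the uncorrupted maximum of some valid corruption.\<close>

definition offset :: "nat \<Rightarrow> nat \<Rightarrow> nat \<Rightarrow> nat" where
  "offset N u v = (v + N - u) mod N"

lemma int_offset: "u \<le> N \<Longrightarrow> int (offset N u v) = (int v - int u) mod int N"
proof -
  assume "u \<le> N"
  then have "int (v + N - u) = (int v - int u) + int N" by simp
  then show ?thesis unfolding offset_def zmod_int by simp
qed

lemma offset_less: "0 < N \<Longrightarrow> offset N u v < N"
  by (simp add: offset_def)

lemma offset_translate:
  assumes "m \<le> N" "u \<le> N"
  shows "offset N (offset N m u) (offset N m v) = offset N u v"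
proof -
  have "offset N m u \<le> N"
    using assms by (cases "N = 0") (simp_all add: offset_def less_imp_le)
  then have "int (offset N (offset N m u) (offset N m v)) = int (offset N u v)"
    using assms by (simp add: int_offset mod_diff_eq)
  then show ?thesis by simp
qed

lemma offset_self [simp]: "offset N u u = 0"
  by (simp add: offset_def)

lemma offset_eq_if: "u < N \<Longrightarrow> v < N \<Longrightarrow> offset N u v = (if u \<le> v then v - u else v + N - u)"
  by (simp add: offset_def le_mod_geq)

lemma offset_eq_0_iff: "u < N \<Longrightarrow> v < N \<Longrightarrow> offset N u v = 0 \<longleftrightarrow> u = v"
  by (auto simp: offset_eq_if)

lemma offset_swap: "u < N \<Longrightarrow> v < N \<Longrightarrow> u \<noteq> v \<Longrightarrow> offset N v u = N - offset N u v"
  by (auto simp: offset_eq_if)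

lemma offset_eq_diff: "u \<le> v \<Longrightarrow> v < N \<Longrightarrow> offset N u v = v - u"
  by (simp add: offset_def le_mod_geq)

lemma offset_rotate: "m \<le> N \<Longrightarrow> j < N \<Longrightarrow> offset N m ((m + j) mod N) = j"
proof -
  assume "m \<le> N" "j < N"
  then have "int (offset N m ((m + j) mod N)) = int j"
    by (simp add: int_offset zmod_int mod_diff_left_eq)
  then show ?thesis by simp
qed

lemma inj_on_offset: "m \<le> N \<Longrightarrow> inj_on (offset N m) {..<N}"
proof (rule inj_onI)
  fix u v assume "m \<le> N" "u \<in> {..<N}" "v \<in> {..<N}" "offset N m u = offset N m v"
  then have "offset N u v = 0"
    using offset_translate[of m N u v] by simp
  then show "u = v"
    using \<open>u \<in> {..<N}\<close> \<open>v \<in> {..<N}\<close> offset_eq_0_iff by blast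
qed

definition tiebreak :: "('a::linorder \<Rightarrow> 'a \<Rightarrow> bool) \<Rightarrow> 'a \<Rightarrow> 'a \<Rightarrow> bool" where
  "tiebreak R u v \<longleftrightarrow> u \<noteq> v \<and> (if R u v \<or> R v u then R u v else u < v)"

lemma tournament_tiebreak:
  assumes "\<And>u v. R u v \<Longrightarrow> \<not> R v u"
  shows "tournament n (tiebreak R)"
  using assms unfolding tournament_def tiebreak_def by auto

lemma acyclic_if_rank_increasing:
  assumes "\<And>u v. u \<in> A \<Longrightarrow> v \<in> A \<Longrightarrow> G u v \<Longrightarrow> f u < (f v :: nat)"
  shows "acyclic {(u, v). u \<in> A \<and> v \<in> A \<and> G u v}"
proof (rule wf_acyclic)
  show "wf {(u, v). u \<in> A \<and> v \<in> A \<and> G u v}"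
    by (rule wf_subset[OF wf_measure[of f]]) (auto dest: assms)
qed

definition short_arc :: "nat \<Rightarrow> nat \<Rightarrow> nat \<Rightarrow> nat \<Rightarrow> bool" where
  "short_arc N k u v \<longleftrightarrow> u < N \<and> v < N \<and> 0 < offset N u v \<and> offset N u v < N - k"

lemma short_arc_asym: "N \<le> 2 * k + 1 \<Longrightarrow> short_arc N k u v \<Longrightarrow> \<not> short_arc N k v u"
proof
  assume "N \<le> 2 * k + 1" "short_arc N k u v" "short_arc N k v u"
  then have "u \<noteq> v" "u < N" "v < N" "offset N u v < N - k" "offset N v u < N - k"
    by (auto simp: short_arc_def offset_eq_0_iff)
  then show False
    using \<open>N \<le> 2 * k + 1\<close> offset_swap[of u N v] by linarith
qed

definition hard_tournament :: "nat \<Rightarrow> nat \<Rightarrow> nat \<Rightarrow> nat \<Rightarrow> bool" where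
  "hard_tournament N k = tiebreak (short_arc N k)"

definition preceding_arc :: "nat \<Rightarrow> nat \<Rightarrow> nat \<Rightarrow> nat set" where
  "preceding_arc N k m = {u. u < N \<and> N - k \<le> offset N m u}"

lemma card_preceding_arc:
  assumes "m < N" "k \<le> N"
  shows "card (preceding_arc N k m) = k"
proof -
  have "offset N m ` preceding_arc N k m = {N - k..<N}"
  proof
    show "offset N m ` preceding_arc N k m \<subseteq> {N - k..<N}"
      using assms by (auto simp: preceding_arc_def offset_less)
    show "{N - k..<N} \<subseteq> offset N m ` preceding_arc N k m"
    proof
      fix j assume "j \<in> {N - k..<N}"
      then have "offset N m ((m + j) mod N) = j" "(m + j) mod N < N"
        using assms by (simp_all add: offset_rotate)
      then show "j \<in> offset N m ` preceding_arc N k m"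
        using \<open>j \<in> {N - k..<N}\<close>
        by (intro image_eqI[where x = "(m + j) mod N"]) (auto simp: preceding_arc_def)
    qed
  qed
  moreover have "inj_on (offset N m) (preceding_arc N k m)"
    by (rule inj_on_subset[OF inj_on_offset[of m N]]) (use assms in \<open>auto simp: preceding_arc_def\<close>)
  ultimately show ?thesis
    using assms card_image by fastforce
qed

lemma short_arc_if_offset_less:
  assumes "m \<le> N" "u < N" "v < N" "offset N m u < offset N m v" "offset N m v < N - k"
  shows "short_arc N k u v"
proof -
  have "offset N u v = offset N m v - offset N m u"
    using assms offset_translate[of m N u v] offset_eq_diff[of "offset N m u" "offset N m v" N]
    by simp
  then show ?thesis
    using assms unfolding short_arc_def by linarith
qed

definition cyclic_rank :: "nat \<Rightarrow> nat \<Rightarrow> nat \<Rightarrow> nat" where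
  "cyclic_rank N m v = (if v < N then offset N m v else v)"

lemma hard_tournament_iff_rank_less:
  assumes "N \<le> 2 * k + 1" "m < N" "u \<notin> preceding_arc N k m" "v \<notin> preceding_arc N k m" "u \<noteq> v"
  shows "hard_tournament N k u v \<longleftrightarrow> cyclic_rank N m u < cyclic_rank N m v"
proof (cases "u < N \<and> v < N")
  case True
  then have arcs: "offset N m u < N - k" "offset N m v < N - k"
    using assms by (auto simp: preceding_arc_def)
  have "offset N m u \<noteq> offset N m v"
    using inj_on_offset[of m N] True assms by (auto dest: inj_onD)
  then consider "offset N m u < offset N m v" | "offset N m v < offset N m u"
    by linarith
  then show ?thesis
  proof cases
    case 1
    then have "short_arc N k u v"
      using True arcs assms by (intro short_arc_if_offset_less) auto
    then show ?thesis
      using 1 True assms by (simp add: hard_tournament_def tiebreak_def cyclic_rank_def)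
  next
    case 2
    then have "short_arc N k v u"
      using True arcs assms by (intro short_arc_if_offset_less) auto
    then have "\<not> short_arc N k u v"
      using short_arc_asym assms(1) by blast
    then show ?thesis
      using 2 True assms \<open>short_arc N k v u\<close>
      by (simp add: hard_tournament_def tiebreak_def cyclic_rank_def)
  qed
next
  case False
  then have "\<not> short_arc N k u v" "\<not> short_arc N k v u"
    by (auto simp: short_arc_def)
  moreover have "offset N m u < N" "offset N m v < N"
    using assms(2) by (simp_all add: offset_less)
  ultimately show ?thesis
    using False assms(5) by (auto simp: hard_tournament_def tiebreak_def cyclic_rank_def)
qed

lemma preceding_arc_isolates_max:
  assumes "N \<le> n" "k < N" "N \<le> 2 * k + 1" "m < N"
  shows "valid_corruption n k (hard_tournament N k) (preceding_arc N k m)"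
    and "is_uncorrupted_max n (hard_tournament N k) (preceding_arc N k m) m"
proof -
  let ?C = "preceding_arc N k m" and ?G = "hard_tournament N k" and ?r = "cyclic_rank N m"
  have edge_iff: "?G u v \<longleftrightarrow> ?r u < ?r v"
    if "u \<in> uncorrupted n ?C" "v \<in> uncorrupted n ?C" "u \<noteq> v" for u v
    using that assms by (intro hard_tournament_iff_rank_less) (auto simp: uncorrupted_def)
  have "acyclic {(u, v). u \<in> uncorrupted n ?C \<and> v \<in> uncorrupted n ?C \<and> ?G u v}"
  proof (rule acyclic_if_rank_increasing)
    fix u v assume "u \<in> uncorrupted n ?C" "v \<in> uncorrupted n ?C" "?G u v"
    moreover from \<open>?G u v\<close> have "u \<noteq> v"
      by (simp add: hard_tournament_def tiebreak_def)
    ultimately show "?r u < ?r v"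
      using edge_iff by blast
  qed
  moreover have "?C \<subseteq> {..<n}"
    using assms(1) by (auto simp: preceding_arc_def)
  ultimately show "valid_corruption n k ?G ?C"
    using card_preceding_arc assms by (simp add: valid_corruption_def)
  have m_survives: "m \<in> uncorrupted n ?C"
    using assms by (simp add: uncorrupted_def preceding_arc_def)
  have "?r m < ?r v" if "v \<in> uncorrupted n ?C" "v \<noteq> m" for v
    using that assms offset_eq_0_iff[of m N v] by (auto simp: cyclic_rank_def)
  then show "is_uncorrupted_max n ?G ?C m"
    using edge_iff m_survives by (auto simp: is_uncorrupted_max_def)
qed

lemma exists_less_notin: "finite S \<Longrightarrow> card S < N \<Longrightarrow> \<exists>m<N. m \<notin> S"
  using card_mono[of S "{..<N}"] by fastforce

theorem mainTheorem1:
  fixes n k :: nat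
  assumes "n \<ge> 1" and "k < n"
  shows "\<exists>G. tournament n G \<and>
     (\<forall>S. S \<subseteq> {..<n} \<and> card S < min n (2 * k + 1) \<longrightarrow>
        (\<exists>C m. valid_corruption n k G C \<and> is_uncorrupted_max n G C m \<and> m \<notin> S)) \<and>
     (\<forall>S. S \<subseteq> {..<n} \<and>
        (\<forall>C m. valid_corruption n k G C \<and> is_uncorrupted_max n G C m \<longrightarrow> m \<in> S) \<longrightarrow>
        card S \<ge> min n (2 * k + 1))"
proof -
  define N where "N = min n (2 * k + 1)"
  have N: "N \<le> n" "k < N" "N \<le> 2 * k + 1"
    using assms by (auto simp: N_def)
  let ?G = "hard_tournament N k"
  have escape: "\<exists>C m. valid_corruption n k ?G C \<and> is_uncorrupted_max n ?G C m \<and> m \<notin> S"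
    if S: "S \<subseteq> {..<n}" "card S < N" for S
  proof -
    obtain m where "m < N" "m \<notin> S"
      using exists_less_notin[OF finite_subset[OF S(1)] S(2)] by blast
    then show ?thesis
      using preceding_arc_isolates_max[OF N] by blast
  qed
  have "tournament n ?G"
    unfolding hard_tournament_def using short_arc_asym[OF N(3)] by (rule tournament_tiebreak)
  moreover have "card S \<ge> N"
    if "S \<subseteq> {..<n}" "\<forall>C m. valid_corruption n k ?G C \<and> is_uncorrupted_max n ?G C m \<longrightarrow> m \<in> S"
    for S
    using escape[of S] that by (meson not_le)
  ultimately show ?thesis
    using escape unfolding N_def by blast
qed

end
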